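(* If $I$ is a finite set of positive integers and $i\in I$, then $d(I;i)=0$, where $d(I;z)$ is the descent polynomial evaluated at $z=i$.
   Context: For a finite set $I$ of positive integers with $m=\max(I\cup\{0\})$ and $n>m$, $d(I;n)$ is the number of permutations $\pi\in\mathfrak S_n$ with $\{j\mid\pi_j>\pi_{j+1}\}=I$; this is a polynomial in $n$, and $d(I;z)$ denotes the polynomial evaluated at an arbitrary complex number $z$. *)

theory Defs
  imports Complex_Main "HOL-Combinatorics.Permutations" "HOL-Computational_Algebra.Polynomial"
begin

definition descent_set :: "nat \<Rightarrow> (nat \<Rightarrow> nat) \<Rightarrow> nat set" where
  "descent_set n \<pi> = {j. 1 \<le> j \<and> j < n \<and> \<pi> j > \<pi> (Suc j)}"

definition descent_count :: "nat set \<Rightarrow> nat \<Rightarrow> nat" where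
  "descent_count I n = card {\<pi>. \<pi> permutes {1..n} \<and> descent_set n \<pi> = I}"

definition descent_poly :: "nat set \<Rightarrow> complex poly" where
  "descent_poly I = (THE p. \<forall>n::nat. n > Max (I \<union> {0}) \<longrightarrow>
       poly p (of_nat n) = of_nat (descent_count I n))"

end

theory Submission
  imports Defs "HOL-Combinatorics.Multiset_Permutations"
begin

text \<open>
  Let \<open>m = max I\<close> and \<open>J = I - {m}\<close>. Cut a permutation of \<open>{1..n}\<close> after
  position \<open>m\<close>: its descent set agrees with \<open>J\<close> away from \<open>m\<close> iff the first \<open>m\<close>
  values form an arrangement of some \<open>m\<close>-set with descent set \<open>J\<close> and the remaining
  values are increasing. These permutations are exactly those with descent set \<open>I\<close> or
  \<open>J\<close>, so \<open>d(I;n) = C(n,m) d(J;m) - d(J;n)\<close> for \<open>n \<ge> m\<close>, which is an identity of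
  polynomials in \<open>n\<close>. At \<open>z = m\<close> the right-hand side is \<open>d(J;m) - d(J;m) = 0\<close>; at
  \<open>z = i \<in> J\<close> we have \<open>C(i,m) = 0\<close> and \<open>d(J;i) = 0\<close> by induction on \<open>I\<close>.
\<close>

text \<open>Lists are permutations in one-line notation; descent positions are 1-based, as in
  \<open>descent_set\<close>.\<close>

definition list_descents :: "nat list \<Rightarrow> nat set" where
  "list_descents xs = {j. 1 \<le> j \<and> j < length xs \<and> xs ! (j - 1) > xs ! j}"

lemma list_descents_subset: "list_descents xs \<subseteq> {1..<length xs}"
  by (auto simp: list_descents_def)

lemma list_descents_map_strict_mono:
  assumes "strict_mono_on A h" "set xs \<subseteq> A"
  shows "list_descents (map h xs) = list_descents xs"
proof -
  have "h (xs ! j) < h (xs ! i) \<longleftrightarrow> xs ! j < xs ! i" if "i < length xs" "j < length xs" for i j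
    using assms that by (intro strict_mono_on_less) auto
  then show ?thesis
    by (auto simp: list_descents_def less_imp_diff_less)
qed

lemma list_descents_empty_iff:
  assumes "distinct xs"
  shows "list_descents xs = {} \<longleftrightarrow> sorted_wrt (<) xs"
proof -
  have "list_descents xs = Suc ` {i. Suc i < length xs \<and> xs ! Suc i < xs ! i}"
    unfolding list_descents_def by (auto simp: image_iff Suc_le_eq dest!: gr0_implies_Suc)
  then have "list_descents xs = {} \<longleftrightarrow> (\<forall>i. Suc i < length xs \<longrightarrow> \<not> xs ! Suc i < xs ! i)"
    by auto
  also have "\<dots> \<longleftrightarrow> (\<forall>i. Suc i < length xs \<longrightarrow> xs ! i < xs ! Suc i)"
  proof -
    have "xs ! i \<noteq> xs ! Suc i" if "Suc i < length xs" for i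
      using assms that by (simp add: nth_eq_iff_index_eq)
    then show ?thesis
      by (meson linorder_neqE_nat order.asym)
  qed
  finally show ?thesis
    by (simp add: sorted_wrt_iff_nth_Suc_transp)
qed

lemma list_descents_append:
  "list_descents (ys @ zs) - {length ys} =
     list_descents ys \<union> (\<lambda>k. k + length ys) ` list_descents zs"
proof -
  have "j \<in> list_descents (ys @ zs) - {length ys} \<longleftrightarrow>
        j \<in> list_descents ys \<union> (\<lambda>k. k + length ys) ` list_descents zs" for j
    by (cases j "length ys" rule: linorder_cases)
       (auto simp: list_descents_def nth_append image_iff intro: exI[of _ "j - length ys"])
  then show ?thesis
    by blast
qed

lemma list_descents_append_eq_iff:
  assumes "J \<subseteq> {1..<length ys}"
  shows "list_descents (ys @ zs) - {length ys} = J \<longleftrightarrow>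
           list_descents ys = J \<and> list_descents zs = {}"
proof -
  have "(\<lambda>k. k + length ys) ` list_descents zs \<inter> {1..<length ys} = {}"
    by auto
  then show ?thesis
    unfolding list_descents_append using assms list_descents_subset[of ys] by blast
qed

definition descent_words :: "nat set \<Rightarrow> nat set \<Rightarrow> nat list set" where
  "descent_words A J = {xs \<in> permutations_of_set A. list_descents xs = J}"

lemma finite_descent_words [simp]: "finite (descent_words A J)"
  by (simp add: descent_words_def)

lemma descent_words_image_strict_mono:
  assumes "strict_mono_on A h"
  shows "descent_words (h ` A) J = map h ` descent_words A J"
proof -
  have "permutations_of_set (h ` A) = map h ` permutations_of_set A"
    using assms by (intro permutations_of_set_image_inj strict_mono_on_imp_inj_on)
  moreover have "list_descents (map h xs) = list_descents xs" if "xs \<in> permutations_of_set A" for xs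
    using assms permutations_of_setD(1)[OF that] by (intro list_descents_map_strict_mono) auto
  ultimately show ?thesis
    unfolding descent_words_def by force
qed

lemma card_descent_words_image_strict_mono:
  assumes "strict_mono_on A h"
  shows "card (descent_words (h ` A) J) = card (descent_words A J)"
proof -
  have "inj_on h (\<Union> (set ` descent_words A J))"
    using strict_mono_on_imp_inj_on[OF assms]
    by (rule inj_on_subset) (auto simp: descent_words_def permutations_of_set_def)
  then show ?thesis
    by (simp add: descent_words_image_strict_mono[OF assms] card_image inj_on_mapI)
qed

lemma card_descent_words_eq_interval:
  assumes "finite A"
  shows "card (descent_words A J) = card (descent_words {1..card A} J)"
proof -
  define s where "s = sorted_list_of_set A"
  define h where "h i = s ! (i - 1)" for i
  have s: "sorted_wrt (<) s" "set s = A" "length s = card A"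
    using assms by (simp_all add: s_def)
  have "strict_mono_on {1..card A} h"
    using s by (auto simp: strict_mono_on_def h_def sorted_wrt_nth_less)
  moreover have "h ` {1..card A} = A"
  proof -
    have "{1..card A} = Suc ` {..<length s}"
      by (simp add: s(3) image_Suc_lessThan)
    then have "h ` {1..card A} = (!) s ` {..<length s}"
      by (simp add: image_image h_def)
    also have "\<dots> = A"
      by (auto simp: s(2)[symmetric] in_set_conv_nth)
    finally show ?thesis .
  qed
  ultimately show ?thesis
    using card_descent_words_image_strict_mono by metis
qed

lemma append_sorted_complement_descents_off:
  assumes "J \<subseteq> {1..<m}" "A \<subseteq> {1..n}" "card A = m" "ys \<in> descent_words A J"
  defines "zs \<equiv> sorted_list_of_set ({1..n} - set ys)"
  shows "ys @ zs \<in> permutations_of_set {1..n}" "list_descents (ys @ zs) - {m} = J"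
proof -
  have ys: "set ys = A" "distinct ys" "length ys = m" "list_descents ys = J"
    using assms(3,4) by (auto simp: descent_words_def permutations_of_set_def distinct_card)
  have zs: "set zs = {1..n} - A" "distinct zs" "list_descents zs = {}"
    using ys by (simp_all add: zs_def list_descents_empty_iff)
  show "ys @ zs \<in> permutations_of_set {1..n}"
    using assms(2) ys zs by (auto simp: permutations_of_set_def)
  show "list_descents (ys @ zs) - {m} = J"
    using list_descents_append_eq_iff[of J ys zs] assms(1) ys zs by simp
qed

lemma descents_off_take_drop:
  assumes "m \<le> n" "J \<subseteq> {1..<m}"
    and "xs \<in> permutations_of_set {1..n}" "list_descents xs - {m} = J"
  shows "take m xs \<in> descent_words (set (take m xs)) J" "length (take m xs) = m"
    and "drop m xs = sorted_list_of_set ({1..n} - set (take m xs))"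
proof -
  have perm: "distinct xs" "set xs = {1..n}" "length xs = n"
    using assms(3) length_finite_permutations_of_set[of xs "{1..n}"]
    by (simp_all add: permutations_of_set_def)
  then show length: "length (take m xs) = m"
    using assms(1) by simp
  have desc: "list_descents (take m xs) = J" "list_descents (drop m xs) = {}"
    using list_descents_append_eq_iff[of J "take m xs" "drop m xs"] assms(2,4) length by simp_all
  then show "take m xs \<in> descent_words (set (take m xs)) J"
    using perm by (simp add: descent_words_def permutations_of_set_def)
  have "distinct (take m xs @ drop m xs)" "set (take m xs @ drop m xs) = {1..n}"
    using perm(1,2) by simp_all
  then have "set (drop m xs) = {1..n} - set (take m xs)" "distinct (drop m xs)"
    by (auto simp del: append_take_drop_id)
  then show "drop m xs = sorted_list_of_set ({1..n} - set (take m xs))"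
    using desc(2) by (intro strict_sorted_equal) (simp_all add: list_descents_empty_iff)
qed

lemma permutations_descents_off_eq_image:
  assumes "m \<le> n" "J \<subseteq> {1..<m}"
  shows "{xs \<in> permutations_of_set {1..n}. list_descents xs - {m} = J} =
           (\<lambda>ys. ys @ sorted_list_of_set ({1..n} - set ys)) `
             (\<Union>A\<in>{A. A \<subseteq> {1..n} \<and> card A = m}. descent_words A J)"
    (is "?T = ?extend ` ?U")
proof
  show "?extend ` ?U \<subseteq> ?T"
    using append_sorted_complement_descents_off[OF assms(2)] by blast
next
  show "?T \<subseteq> ?extend ` ?U"
  proof
    fix xs assume "xs \<in> ?T"
    then have "take m xs \<in> ?U" "xs = ?extend (take m xs)"
      using descents_off_take_drop[OF assms, of xs] append_take_drop_id[of m xs]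
      by (auto simp: descent_words_def permutations_of_set_def distinct_card dest: in_set_takeD)
    then show "xs \<in> ?extend ` ?U"
      by blast
  qed
qed

lemma card_permutations_descents_off:
  assumes "m \<le> n" "J \<subseteq> {1..<m}"
  shows "card {xs \<in> permutations_of_set {1..n}. list_descents xs - {m} = J} =
           (n choose m) * card (descent_words {1..m} J)"
proof -
  define S where "S = {A. A \<subseteq> {1..n} \<and> card A = m}"
  define extend where "extend ys = ys @ sorted_list_of_set ({1..n} - set ys)" for ys
  have image: "{xs \<in> permutations_of_set {1..n}. list_descents xs - {m} = J} =
                 extend ` (\<Union>A\<in>S. descent_words A J)"
    unfolding S_def extend_def by (rule permutations_descents_off_eq_image[OF assms])
  have "inj_on extend (\<Union>A\<in>S. descent_words A J)"
  proof (rule inj_onI)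
    fix ys ys' assume "ys \<in> (\<Union>A\<in>S. descent_words A J)" "ys' \<in> (\<Union>A\<in>S. descent_words A J)"
    then have "length ys = m" "length ys' = m"
      by (auto simp: S_def descent_words_def length_finite_permutations_of_set)
    moreover assume "extend ys = extend ys'"
    ultimately show "ys = ys'"
      unfolding extend_def by (metis append_eq_append_conv)
  qed
  then have "card {xs \<in> permutations_of_set {1..n}. list_descents xs - {m} = J} =
               card (\<Union>A\<in>S. descent_words A J)"
    unfolding image by (rule card_image)
  also have "\<dots> = (\<Sum>A\<in>S. card (descent_words A J))"
    by (rule card_UN_disjoint) (auto simp: S_def descent_words_def dest: permutations_of_setD(1))
  also have "\<dots> = (\<Sum>A\<in>S. card (descent_words {1..m} J))"
  proof (rule sum.cong[OF refl])
    fix A assume "A \<in> S"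
    then have "finite A" "card A = m"
      by (auto simp: S_def intro: finite_subset)
    then show "card (descent_words A J) = card (descent_words {1..m} J)"
      using card_descent_words_eq_interval by metis
  qed
  also have "\<dots> = (n choose m) * card (descent_words {1..m} J)"
    by (simp add: S_def n_subsets)
  finally show ?thesis .
qed

lemma list_descents_map_upt: "list_descents (map \<pi> [1..<Suc n]) = descent_set n \<pi>"
  by (auto simp: list_descents_def descent_set_def nth_upt simp del: upt_Suc)

lemma bij_betw_permutes_permutations_of_set:
  "bij_betw (\<lambda>\<pi>. map \<pi> [1..<Suc n]) {\<pi>. \<pi> permutes {1..n}} (permutations_of_set {1..n})"
  (is "bij_betw ?word ?P ?W")
proof -
  have "inj_on ?word ?P"
  proof (rule inj_onI)
    fix \<pi> \<sigma> assume "\<pi> \<in> ?P" "\<sigma> \<in> ?P" and word: "?word \<pi> = ?word \<sigma>"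
    have "\<pi> j = \<sigma> j" for j
    proof (cases "j \<in> {1..n}")
      case True
      then have "?word \<pi> ! (j - 1) = \<pi> j" "?word \<sigma> ! (j - 1) = \<sigma> j"
        by (auto simp: nth_upt simp del: upt_Suc)
      then show ?thesis
        using word by metis
    next
      case False
      then show ?thesis
        using \<open>\<pi> \<in> ?P\<close> \<open>\<sigma> \<in> ?P\<close> by (simp add: permutes_not_in)
    qed
    then show "\<pi> = \<sigma>" ..
  qed
  moreover have "?word ` ?P \<subseteq> ?W"
    by (auto simp: permutations_of_set_def atLeastLessThanSuc_atLeastAtMost permutes_image
        distinct_map permutes_inj_on simp del: upt_Suc)
  moreover have "card (?word ` ?P) = card ?W"
    using calculation(1) by (simp add: card_image card_permutations)
  ultimately show ?thesis
    by (simp add: bij_betw_def card_subset_eq)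
qed

lemma descent_count_eq_card_descent_words:
  "descent_count I n = card (descent_words {1..n} I)"
proof -
  have "bij_betw (\<lambda>\<pi>. map \<pi> [1..<Suc n])
          {\<pi> \<in> {\<pi>. \<pi> permutes {1..n}}. descent_set n \<pi> = I} (descent_words {1..n} I)"
    unfolding descent_words_def
    by (rule bij_betw_Collect[OF bij_betw_permutes_permutations_of_set])
       (simp only: list_descents_map_upt)
  then show ?thesis
    unfolding descent_count_def mem_Collect_eq by (rule bij_betw_same_card)
qed

lemma descent_words_empty:
  assumes "finite A"
  shows "descent_words A {} = {sorted_list_of_set A}"
proof -
  have "list_descents (sorted_list_of_set A) = {}"
    using assms by (intro list_descents_empty_iff[THEN iffD2]) simp_all
  then show ?thesis
    using assms
    by (auto simp: descent_words_def permutations_of_set_def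
        dest: list_descents_empty_iff[THEN iffD1] intro: strict_sorted_equal)
qed

lemma descent_count_empty: "descent_count {} n = 1"
  by (simp add: descent_count_eq_card_descent_words descent_words_empty)

lemma descent_count_remove_Max:
  assumes "finite I" "I \<noteq> {}" "0 \<notin> I" "Max I \<le> n"
  defines "m \<equiv> Max I" and "J \<equiv> I - {Max I}"
  shows "descent_count I n + descent_count J n = (n choose m) * descent_count J m"
proof -
  have I: "I = insert m J" "m \<notin> J"
    using Max_in[OF assms(1,2)] by (auto simp: J_def m_def)
  have J: "J \<subseteq> {1..<m}"
  proof
    fix j assume "j \<in> J"
    then have "j \<in> I" "j \<noteq> m"
      by (auto simp: J_def m_def)
    then show "j \<in> {1..<m}"
      using assms(3) Max_ge[OF assms(1) \<open>j \<in> I\<close>] by (cases "j = 0") (auto simp: m_def)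
  qed
  have "{xs \<in> permutations_of_set {1..n}. list_descents xs - {m} = J} =
          descent_words {1..n} I \<union> descent_words {1..n} J"
    using I by (auto simp: descent_words_def)
  moreover have "descent_words {1..n} I \<inter> descent_words {1..n} J = {}"
    using I by (auto simp: descent_words_def)
  ultimately show ?thesis
    using card_permutations_descents_off[OF _ J, of n] assms(4)
    by (simp add: descent_count_eq_card_descent_words card_Un_disjoint m_def)
qed

definition binomial_poly :: "nat \<Rightarrow> 'a::field_char_0 poly" where
  "binomial_poly m = smult (1 / fact m) (\<Prod>k<m. [:- of_nat k, 1:])"

lemma poly_binomial_poly: "poly (binomial_poly m) (of_nat n) = of_nat (n choose m)"
  unfolding binomial_poly_def binomial_gbinomial gbinomial_prod_rev
  by (simp add: poly_prod atLeast0LessThan field_simps)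

lemma poly_eqI_of_nat_greater:
  fixes p q :: "'a::{idom, ring_char_0} poly"
  assumes "\<And>n. n > M \<Longrightarrow> poly p (of_nat n) = poly q (of_nat n)"
  shows "p = q"
proof (rule ccontr)
  assume "p \<noteq> q"
  then have "finite {x. poly (p - q) x = 0}"
    by (intro poly_roots_finite) simp
  moreover have "of_nat ` {M<..} \<subseteq> {x. poly (p - q) x = 0}"
    using assms by auto
  ultimately have "finite (of_nat ` {M<..} :: 'a set)"
    by (rule finite_subset[rotated])
  then show False
    using finite_imageD[of of_nat "{M<..}"] inj_of_nat infinite_Ioi by (metis inj_on_subset subset_UNIV)
qed

lemma descent_polynomial_exists:
  assumes "finite I" "0 \<notin> I"
  shows "\<exists>p :: 'a::field_char_0 poly.
           (\<forall>n > Max (I \<union> {0}). poly p (of_nat n) = of_nat (descent_count I n)) \<and>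
           (\<forall>i\<in>I. poly p (of_nat i) = 0)"
  using assms
proof (induction I rule: finite_remove_induct)
  case empty
  show ?case
    by (intro exI[of _ 1]) (simp add: descent_count_empty)
next
  case (remove I)
  define m where "m = Max I"
  define J where "J = I - {m}"
  have m: "m \<in> I" "0 < m"
    using Max_in[OF remove(1,2)] remove.prems by (auto simp: m_def intro: gr0I)
  have J_less: "j < m" if "j \<in> J" for j
    using that remove(1) by (auto simp: J_def m_def order.not_eq_order_implies_strict)
  have Max_I: "Max (I \<union> {0}) = m"
    using remove(1,2) by (simp add: m_def max_def)
  have Max_J: "Max (J \<union> {0}) < m"
    using J_less m remove(1) by (simp add: J_def)
  obtain q :: "'a poly"
    where q: "\<And>n. n > Max (J \<union> {0}) \<Longrightarrow> poly q (of_nat n) = of_nat (descent_count J n)"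
             "\<And>j. j \<in> J \<Longrightarrow> poly q (of_nat j) = 0"
    using remove.IH[OF m(1)] remove.prems by (auto simp: J_def)
  define p where "p = smult (of_nat (descent_count J m)) (binomial_poly m) - q"
  have "poly p (of_nat n) = of_nat (descent_count I n)" if "n > m" for n
  proof -
    have "descent_count I n + descent_count J n = (n choose m) * descent_count J m"
      unfolding J_def m_def
      by (rule descent_count_remove_Max[OF remove(1,2) remove.prems]) (use that in \<open>simp add: m_def\<close>)
    then have "(of_nat (descent_count I n) :: 'a) =
                 of_nat (descent_count J m) * of_nat (n choose m) - of_nat (descent_count J n)"
      by (simp add: algebra_simps flip: of_nat_mult of_nat_add)
    then show ?thesis
      using q(1)[of n] Max_J that by (simp add: p_def poly_binomial_poly)
  qed
  moreover have "poly p (of_nat i) = 0" if "i \<in> I" for i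
  proof (cases "i = m")
    case True
    then show ?thesis
      using q(1)[of m] Max_J by (simp add: p_def poly_binomial_poly)
  next
    case False
    then have "i \<in> J" "i < m"
      using that J_less by (auto simp: J_def)
    then show ?thesis
      using q(2) by (simp add: p_def poly_binomial_poly)
  qed
  ultimately show ?case
    using Max_I by metis
qed

theorem theorem4p1:
  fixes I :: "nat set" and i :: nat
  assumes "finite I" and "\<forall>k\<in>I. k > 0" and "i \<in> I"
  shows "poly (descent_poly I) (of_nat i) = 0"
proof -
  have "0 \<notin> I"
    using assms(2) by blast
  then obtain p :: "complex poly"
    where p: "\<forall>n > Max (I \<union> {0}). poly p (of_nat n) = of_nat (descent_count I n)"
             "\<forall>i\<in>I. poly p (of_nat i) = 0"
    using descent_polynomial_exists[OF assms(1)] by blast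
  have "descent_poly I = p"
    unfolding descent_poly_def
  proof (rule the_equality)
    fix r :: "complex poly"
    assume "\<forall>n > Max (I \<union> {0}). poly r (of_nat n) = of_nat (descent_count I n)"
    with p(1) show "r = p"
      by (intro poly_eqI_of_nat_greater[of "Max (I \<union> {0})"]) simp
  qed (use p(1) in blast)
  then show ?thesis
    using p(2) assms(3) by simp
qed

end
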